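(* Let $K$ be a unital commutative ring containing $\mathbb{Q}$ and let $\big(\mathfrak{h},p,\mathfrak{g},[~,~]_\mathfrak{g},\dot{\rho}\big)$ be a $\mathfrak{g}$-augmented Leibniz algebra over $K$. Define a bracket on $\mathfrak{h}$ by $[x,y]_\mathfrak{h}:=p(x).y$ for $x,y\in\mathfrak{h}$. Then: \begin{enumerate} \item $\big(\mathfrak{h},[~,~]_\mathfrak{h}\big)$ is a (left) Leibniz algebra on which $\mathfrak{g}$ acts by derivations (via $\dot\rho$). If $(\Phi,\phi)$ is a morphism of augmented Leibniz algebras, then $\Phi$ is a morphism of Leibniz algebras for these brackets. \item $\mathrm{Ker}(p)$ is a $\mathfrak{g}$-invariant two-sided abelian ideal of $\big(\mathfrak{h},[~,~]_\mathfrak{h}\big)$ satisfying $Q(\mathfrak{h})\subset\mathrm{Ker}(p)\subset\mathfrak{z}(\mathfrak{h})$. \item $\mathrm{Im}(p)$ is an ideal of the Lie algebra $\mathfrak{g}$. \end{enumerate}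
   Context: A (left) Leibniz algebra over $K$ is a $K$-module $\mathfrak{h}$ with a bilinear bracket satisfying $[x,[y,z]]=[[x,y],z]+[y,[x,z]]$ for all $x,y,z$; a morphism of Leibniz algebras is a $K$-linear bracket-preserving map. For a Leibniz algebra $\mathfrak{h}$: $Q(\mathfrak{h})$ is the $K$-submodule of all finite sums $\sum_r\lambda_r[x_r,x_r]$ ($\lambda_r\in K$, $x_r\in\mathfrak{h}$), and $\mathfrak{z}(\mathfrak{h}):=\{x\in\mathfrak{h}\mid [x,y]=0\ \forall y\in\mathfrak{h}\}$. A $\mathfrak{g}$-augmented Leibniz algebra $\big(\mathfrak{h},p,\mathfrak{g},[~,~]_\mathfrak{g},\dot{\rho}\big)$ consists of a Lie algebra $(\mathfrak{g},[~,~]_\mathfrak{g})$ over $K$, a $K$-module $\mathfrak{h}$ which is a left $\mathfrak{g}$-module via $\dot\rho:\mathfrak{g}\otimes\mathfrak{h}\to\mathfrak{h}$, written $\dot\rho_\xi(x)=\xi.x$, and a $K$-linear map $p:\mathfrak{h}\to\mathfrak{g}$ with $p(\xi.x)=[\xi,p(x)]_\mathfrak{g}$ for all $\xi\in\mathfrak{g},x\in\mathfrak{h}$. A morphism $(\Phi,\phi)$ from $\big(\mathfrak{h},p,\mathfrak{g},[~,~]_\mathfrak{g},\dot{\rho}\big)$ to $\big(\mathfrak{h}',p',\mathfrak{g}',[~,~]'_{\mathfrak{g}'},\dot{\rho}'\big)$ is a pair of $K$-linear maps with $\phi:\mathfrak{g}\to\mathfrak{g}'$ a Lie algebra morphism,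 $\Phi:\mathfrak{h}\to\mathfrak{h}'$ satisfying $\Phi(\xi.x)=\phi(\xi).\Phi(x)$, and $p'\circ\Phi=\phi\circ p$. *)

theory Defs
  imports Complex_Main
begin

definition contains_rationals :: "'k::comm_ring_1 itself \<Rightarrow> bool" where
  "contains_rationals _ \<longleftrightarrow> (\<forall>n::nat. n > 0 \<longrightarrow> (\<exists>y::'k. of_nat n * y = 1))"

definition bilinear_map ::
  "('k::comm_ring_1 \<Rightarrow> 'a::ab_group_add \<Rightarrow> 'a) \<Rightarrow> ('k \<Rightarrow> 'b::ab_group_add \<Rightarrow> 'b) \<Rightarrow>
   ('k \<Rightarrow> 'c::ab_group_add \<Rightarrow> 'c) \<Rightarrow> ('a \<Rightarrow> 'b \<Rightarrow> 'c) \<Rightarrow> bool" where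
  "bilinear_map s1 s2 s3 f \<longleftrightarrow>
     (\<forall>x. module_hom s2 s3 (f x)) \<and> (\<forall>y. module_hom s1 s3 (\<lambda>x. f x y))"

definition leibniz_algebra ::
  "('k::comm_ring_1 \<Rightarrow> 'h::ab_group_add \<Rightarrow> 'h) \<Rightarrow> ('h \<Rightarrow> 'h \<Rightarrow> 'h) \<Rightarrow> bool" where
  "leibniz_algebra s br \<longleftrightarrow> module s \<and> bilinear_map s s s br \<and>
     (\<forall>x y z. br x (br y z) = br (br x y) z + br y (br x z))"

definition lie_algebra ::
  "('k::comm_ring_1 \<Rightarrow> 'g::ab_group_add \<Rightarrow> 'g) \<Rightarrow> ('g \<Rightarrow> 'g \<Rightarrow> 'g) \<Rightarrow> bool" where
  "lie_algebra s br \<longleftrightarrow> module s \<and> bilinear_map s s s br \<and> (\<forall>x. br x x = 0) \<and>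
     (\<forall>x y z. br x (br y z) = br (br x y) z + br y (br x z))"

definition lie_module ::
  "('k::comm_ring_1 \<Rightarrow> 'g::ab_group_add \<Rightarrow> 'g) \<Rightarrow> ('g \<Rightarrow> 'g \<Rightarrow> 'g) \<Rightarrow>
   ('k \<Rightarrow> 'h::ab_group_add \<Rightarrow> 'h) \<Rightarrow> ('g \<Rightarrow> 'h \<Rightarrow> 'h) \<Rightarrow> bool" where
  "lie_module sg brg sh act \<longleftrightarrow> lie_algebra sg brg \<and> module sh \<and> bilinear_map sg sh sh act \<and>
     (\<forall>\<xi> \<eta> x. act (brg \<xi> \<eta>) x = act \<xi> (act \<eta> x) - act \<eta> (act \<xi> x))"

definition augmented_leibniz ::
  "('k::comm_ring_1 \<Rightarrow> 'h::ab_group_add \<Rightarrow> 'h) \<Rightarrow> ('h \<Rightarrow> 'g::ab_group_add) \<Rightarrow>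
   ('k \<Rightarrow> 'g \<Rightarrow> 'g) \<Rightarrow> ('g \<Rightarrow> 'g \<Rightarrow> 'g) \<Rightarrow> ('g \<Rightarrow> 'h \<Rightarrow> 'h) \<Rightarrow> bool" where
  "augmented_leibniz sh p sg brg act \<longleftrightarrow> lie_module sg brg sh act \<and> module_hom sh sg p \<and>
     (\<forall>\<xi> x. p (act \<xi> x) = brg \<xi> (p x))"

definition augmented_leibniz_morphism ::
  "('k::comm_ring_1 \<Rightarrow> 'h::ab_group_add \<Rightarrow> 'h) \<Rightarrow> ('h \<Rightarrow> 'g::ab_group_add) \<Rightarrow>
   ('k \<Rightarrow> 'g \<Rightarrow> 'g) \<Rightarrow> ('g \<Rightarrow> 'g \<Rightarrow> 'g) \<Rightarrow> ('g \<Rightarrow> 'h \<Rightarrow> 'h) \<Rightarrow>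
   ('k \<Rightarrow> 'h2::ab_group_add \<Rightarrow> 'h2) \<Rightarrow> ('h2 \<Rightarrow> 'g2::ab_group_add) \<Rightarrow>
   ('k \<Rightarrow> 'g2 \<Rightarrow> 'g2) \<Rightarrow> ('g2 \<Rightarrow> 'g2 \<Rightarrow> 'g2) \<Rightarrow> ('g2 \<Rightarrow> 'h2 \<Rightarrow> 'h2) \<Rightarrow>
   ('h \<Rightarrow> 'h2) \<Rightarrow> ('g \<Rightarrow> 'g2) \<Rightarrow> bool" where
  "augmented_leibniz_morphism sh p sg brg act sh' p' sg' brg' act' Phi phi \<longleftrightarrow>
     module_hom sg sg' phi \<and> (\<forall>\<xi> \<eta>. phi (brg \<xi> \<eta>) = brg' (phi \<xi>) (phi \<eta>)) \<and>
     module_hom sh sh' Phi \<and> (\<forall>\<xi> x. Phi (act \<xi> x) = act' (phi \<xi>) (Phi x)) \<and>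
     (\<forall>x. p' (Phi x) = phi (p x))"

definition leibniz_morphism ::
  "('k::comm_ring_1 \<Rightarrow> 'h::ab_group_add \<Rightarrow> 'h) \<Rightarrow> ('h \<Rightarrow> 'h \<Rightarrow> 'h) \<Rightarrow>
   ('k \<Rightarrow> 'h2::ab_group_add \<Rightarrow> 'h2) \<Rightarrow> ('h2 \<Rightarrow> 'h2 \<Rightarrow> 'h2) \<Rightarrow> ('h \<Rightarrow> 'h2) \<Rightarrow> bool" where
  "leibniz_morphism s br s' br' f \<longleftrightarrow> module_hom s s' f \<and> (\<forall>x y. f (br x y) = br' (f x) (f y))"

definition aug_bracket :: "('h \<Rightarrow> 'g) \<Rightarrow> ('g \<Rightarrow> 'h \<Rightarrow> 'h) \<Rightarrow> 'h \<Rightarrow> 'h \<Rightarrow> 'h" where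
  "aug_bracket p act x y = act (p x) y"

definition acts_by_derivations :: "('g \<Rightarrow> 'h \<Rightarrow> 'h) \<Rightarrow> ('h \<Rightarrow> 'h \<Rightarrow> 'h::plus) \<Rightarrow> bool" where
  "acts_by_derivations act br \<longleftrightarrow> (\<forall>\<xi> x y. act \<xi> (br x y) = br (act \<xi> x) y + br x (act \<xi> y))"

definition leibniz_ideal ::
  "('k::comm_ring_1 \<Rightarrow> 'h::ab_group_add \<Rightarrow> 'h) \<Rightarrow> ('h \<Rightarrow> 'h \<Rightarrow> 'h) \<Rightarrow> 'h set \<Rightarrow> bool" where
  "leibniz_ideal s br I \<longleftrightarrow> module.subspace s I \<and>
     (\<forall>x\<in>I. \<forall>y. br x y \<in> I \<and> br y x \<in> I)"

definition abelian_subset :: "('h \<Rightarrow> 'h \<Rightarrow> 'h::zero) \<Rightarrow> 'h set \<Rightarrow> bool" where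
  "abelian_subset br I \<longleftrightarrow> (\<forall>x\<in>I. \<forall>y\<in>I. br x y = 0)"

definition invariant_subset :: "('g \<Rightarrow> 'h \<Rightarrow> 'h) \<Rightarrow> 'h set \<Rightarrow> bool" where
  "invariant_subset act I \<longleftrightarrow> (\<forall>\<xi> x. x \<in> I \<longrightarrow> act \<xi> x \<in> I)"

definition Qsq :: "('k::comm_ring_1 \<Rightarrow> 'h::ab_group_add \<Rightarrow> 'h) \<Rightarrow> ('h \<Rightarrow> 'h \<Rightarrow> 'h) \<Rightarrow> 'h set" where
  "Qsq s br = module.span s {br x x | x. True}"

definition left_center :: "('h \<Rightarrow> 'h \<Rightarrow> 'h::zero) \<Rightarrow> 'h set" where
  "left_center br = {x. \<forall>y. br x y = 0}"

definition lie_ideal ::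
  "('k::comm_ring_1 \<Rightarrow> 'g::ab_group_add \<Rightarrow> 'g) \<Rightarrow> ('g \<Rightarrow> 'g \<Rightarrow> 'g) \<Rightarrow> 'g set \<Rightarrow> bool" where
  "lie_ideal s br I \<longleftrightarrow> module.subspace s I \<and> (\<forall>x. \<forall>y\<in>I. br x y \<in> I)"

end

theory Submission
  imports Defs
begin

text \<open>
  Equivariance of p gives p([x,y]) = p(p(x).y) = [p x, p y]_g, so the Leibniz identity for
  [x,y] := p(x).y is the representation identity for the bracket [p x, p y]_g, and g acts by
  derivations for the same reason. Elements of Ker(p) act by 0, which makes the kernel lie in
  the left centre, while the squares [x,x] are mapped by p to [p x, p x]_g = 0.
\<close>

lemma augmented_leibniz_p_act:
  assumes "augmented_leibniz sh p sg brg act"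
  shows "p (act \<xi> x) = brg \<xi> (p x)"
  using assms by (simp add: augmented_leibniz_def)

lemma augmented_leibniz_act_bracket:
  assumes "augmented_leibniz sh p sg brg act"
  shows "act (brg \<xi> \<eta>) x = act \<xi> (act \<eta> x) - act \<eta> (act \<xi> x)"
  using assms by (simp add: augmented_leibniz_def lie_module_def)

lemma augmented_leibniz_act_zero_left:
  assumes "augmented_leibniz sh p sg brg act"
  shows "act 0 x = 0"
proof -
  from assms have "module_hom sg sh (\<lambda>\<xi>. act \<xi> x)"
    by (simp add: augmented_leibniz_def lie_module_def bilinear_map_def)
  then show ?thesis by (rule module_hom.zero)
qed

lemma augmented_leibniz_bracket_zero_right:
  assumes "augmented_leibniz sh p sg brg act"
  shows "brg \<xi> 0 = 0"
proof -
  from assms have "module_hom sg sg (brg \<xi>)"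
    by (simp add: augmented_leibniz_def lie_module_def lie_algebra_def bilinear_map_def)
  then show ?thesis by (rule module_hom.zero)
qed

lemma leibniz_algebra_aug_bracket:
  assumes "augmented_leibniz sh p sg brg act"
  shows "leibniz_algebra sh (aug_bracket p act)"
proof -
  from assms have p_hom: "module_hom sh sg p" and act_hom: "bilinear_map sg sh sh act"
    and "module sh"
    by (auto simp: augmented_leibniz_def lie_module_def)
  have "module_hom sh sh (\<lambda>x. act (p x) y)" for y
    using module_hom_compose[OF p_hom, of sh "\<lambda>\<xi>. act \<xi> y"] act_hom
    by (simp add: bilinear_map_def comp_def)
  with act_hom \<open>module sh\<close> show ?thesis
    unfolding leibniz_algebra_def bilinear_map_def aug_bracket_def
    by (simp add: augmented_leibniz_p_act[OF assms] augmented_leibniz_act_bracket[OF assms])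
qed

lemma acts_by_derivations_aug_bracket:
  assumes "augmented_leibniz sh p sg brg act"
  shows "acts_by_derivations act (aug_bracket p act)"
proof -
  from assms have "module_hom sh sh (act \<xi>)" for \<xi>
    by (simp add: augmented_leibniz_def lie_module_def bilinear_map_def)
  then show ?thesis
    by (simp add: acts_by_derivations_def aug_bracket_def module_hom.add
        augmented_leibniz_p_act[OF assms] augmented_leibniz_act_bracket[OF assms])
qed

lemma leibniz_morphism_aug_bracket:
  assumes "augmented_leibniz_morphism sh p sg brg act sh' p' sg' brg' act' Phi phi"
  shows "leibniz_morphism sh (aug_bracket p act) sh' (aug_bracket p' act') Phi"
  using assms by (simp add: augmented_leibniz_morphism_def leibniz_morphism_def aug_bracket_def)

lemma invariant_subset_kernel:
  assumes "augmented_leibniz sh p sg brg act"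
  shows "invariant_subset act {x. p x = 0}"
  by (simp add: invariant_subset_def augmented_leibniz_p_act[OF assms]
      augmented_leibniz_bracket_zero_right[OF assms])

lemma kernel_subset_left_center:
  assumes "augmented_leibniz sh p sg brg act"
  shows "{x. p x = 0} \<subseteq> left_center (aug_bracket p act)"
  by (auto simp: left_center_def aug_bracket_def augmented_leibniz_act_zero_left[OF assms])

lemma abelian_subset_kernel:
  assumes "augmented_leibniz sh p sg brg act"
  shows "abelian_subset (aug_bracket p act) {x. p x = 0}"
  using kernel_subset_left_center[OF assms] by (auto simp: abelian_subset_def left_center_def)

lemma leibniz_ideal_kernel:
  assumes "augmented_leibniz sh p sg brg act"
  shows "leibniz_ideal sh (aug_bracket p act) {x. p x = 0}"
proof -
  from assms have "module_hom sh sg p" by (simp add: augmented_leibniz_def)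
  then have "module.subspace sh {x. p x = 0}" by (rule module_hom.subspace_kernel)
  then show ?thesis
    by (simp add: leibniz_ideal_def aug_bracket_def module_hom.zero[OF \<open>module_hom sh sg p\<close>]
        augmented_leibniz_act_zero_left[OF assms] augmented_leibniz_p_act[OF assms]
        augmented_leibniz_bracket_zero_right[OF assms])
qed

lemma Qsq_subset_kernel:
  assumes "augmented_leibniz sh p sg brg act"
  shows "Qsq sh (aug_bracket p act) \<subseteq> {x. p x = 0}"
proof -
  from assms have p_hom: "module_hom sh sg p" and "module sh" and alt: "\<And>\<xi>. brg \<xi> \<xi> = 0"
    by (auto simp: augmented_leibniz_def lie_module_def lie_algebra_def)
  have "{aug_bracket p act x x | x. True} \<subseteq> {x. p x = 0}"
    by (auto simp: aug_bracket_def augmented_leibniz_p_act[OF assms] alt)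
  then show ?thesis
    unfolding Qsq_def
    by (rule module.span_minimal[OF \<open>module sh\<close> _ module_hom.subspace_kernel[OF p_hom]])
qed

lemma lie_ideal_range:
  assumes "augmented_leibniz sh p sg brg act"
  shows "lie_ideal sg brg (range p)"
proof -
  from assms have p_hom: "module_hom sh sg p" and "module sh"
    by (auto simp: augmented_leibniz_def lie_module_def)
  have "module.subspace sg (range p)"
    using module_hom.subspace_image[OF p_hom module.subspace_UNIV[OF \<open>module sh\<close>]] by simp
  moreover have "brg \<xi> (p x) \<in> range p" for \<xi> x
    by (metis augmented_leibniz_p_act[OF assms] rangeI)
  ultimately show ?thesis by (auto simp: lie_ideal_def)
qed

theorem proposition2p2:
  fixes sh :: "'k::comm_ring_1 \<Rightarrow> 'h::ab_group_add \<Rightarrow> 'h"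
    and sg :: "'k \<Rightarrow> 'g::ab_group_add \<Rightarrow> 'g"
    and p :: "'h \<Rightarrow> 'g" and brg :: "'g \<Rightarrow> 'g \<Rightarrow> 'g" and act :: "'g \<Rightarrow> 'h \<Rightarrow> 'h"
  assumes "contains_rationals TYPE('k)"
    and "augmented_leibniz sh p sg brg act"
  shows "leibniz_algebra sh (aug_bracket p act)
      \<and> acts_by_derivations act (aug_bracket p act)
      \<and> (\<forall>(sh' :: 'k \<Rightarrow> 'h2::ab_group_add \<Rightarrow> 'h2) (p' :: 'h2 \<Rightarrow> 'g2::ab_group_add)
            (sg' :: 'k \<Rightarrow> 'g2 \<Rightarrow> 'g2) brg' act' Phi phi.
           augmented_leibniz sh' p' sg' brg' act' \<longrightarrow>
           augmented_leibniz_morphism sh p sg brg act sh' p' sg' brg' act' Phi phi \<longrightarrow>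
           leibniz_morphism sh (aug_bracket p act) sh' (aug_bracket p' act') Phi)
      \<and> leibniz_ideal sh (aug_bracket p act) {x. p x = 0}
      \<and> invariant_subset act {x. p x = 0}
      \<and> abelian_subset (aug_bracket p act) {x. p x = 0}
      \<and> Qsq sh (aug_bracket p act) \<subseteq> {x. p x = 0}
      \<and> {x. p x = 0} \<subseteq> left_center (aug_bracket p act)
      \<and> lie_ideal sg brg (range p)"
  by (intro conjI allI impI leibniz_morphism_aug_bracket leibniz_algebra_aug_bracket[OF assms(2)]
      acts_by_derivations_aug_bracket[OF assms(2)] leibniz_ideal_kernel[OF assms(2)]
      invariant_subset_kernel[OF assms(2)] abelian_subset_kernel[OF assms(2)]
      Qsq_subset_kernel[OF assms(2)] kernel_subset_left_center[OF assms(2)]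
      lie_ideal_range[OF assms(2)])

end
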